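(* Let $I$ be a non-empty set. Then $\mathbb{M}_I(\mathbb{C})$ is Johnson pseudo-Connes amenable if and only if $I$ is finite.
   Context: $\mathbb{M}_I(\mathbb{C})$ is the Banach algebra of $I\times I$ complex matrices $[a_{i,j}]$ with finite norm $\sum_{i,j\in I}|a_{i,j}|$ (i.e. $\ell^1(I\times I)$) under matrix multiplication; it is a dual Banach algebra with predual $c_0(I\times I)$. A dual Banach algebra is a Banach algebra $\mathcal{A}$ with a closed $\mathcal{A}$-submodule $\mathcal{A}_*$ of $\mathcal{A}^*$ such that $\mathcal{A}=(\mathcal{A}_* )^*$. For a bimodule $E$, $\sigma wc(E)$ is the set of $x\in E$ for which $a\mapsto a\cdot x$, $a\mapsto x\cdot a$ are weak$^*$-weak continuous. $\mathcal{A}\hat{\otimes}\mathcal{A}$ has actions $a\cdot(b\otimes c)=ab\otimes c$, $(b\otimes c)\cdot a=b\otimes ca$; duals carry the dual actions. $\pi_{\mathcal{A}}$ is the multiplication map $\mathcal{A}\hat{\otimes}\mathcal{A}\to\mathcal{A}$, $i_{\mathcal{A}_*}:\mathcal{A}_*\hookrightarrow\mathcal{A}^*$ the canonical embedding. $\mathcal{A}$ is Johnson pseudo-Connes amenable if there is a (not necessarily bounded) net $(m_\alpha)$ in $(\mathcal{A}\hat{\otimes}\mathcal{A})^{**}$ with $\langle T,a\cdot m_\alpha\rangle=\langle T,m_\alpha\cdot a\rangle$ for all $a\in\mathcal{A}$, $T\in\sigma wc((\mathcal{A}\hat{\otimes}\mathcal{A})^* )$, $\alpha$, and $i_{\mathcal{A}_*}^*\pi_{\mathcal{A}}^{**}(m_\alpha)a\to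 a$ for every $a\in\mathcal{A}$. *)

theory Defs
  imports "HOL-Analysis.Analysis"
begin

definition l1 :: "('x \<Rightarrow> complex) set" where
  "l1 = {u. (\<lambda>x. norm (u x)) summable_on UNIV}"

definition n1 :: "('x \<Rightarrow> complex) \<Rightarrow> real" where
  "n1 u = (\<Sum>\<^sub>\<infinity>x. norm (u x))"

definition c0 :: "('x \<Rightarrow> complex) set" where
  "c0 = {f. \<forall>e>0. finite {x. e \<le> norm (f x)}}"

definition pair :: "('x \<Rightarrow> complex) \<Rightarrow> ('x \<Rightarrow> complex) \<Rightarrow> complex" where
  "pair f a = (\<Sum>\<^sub>\<infinity>x. f x * a x)"

definition dual_space ::
  "('y \<Rightarrow> complex) set \<Rightarrow> (('y \<Rightarrow> complex) \<Rightarrow> real) \<Rightarrow> (('y \<Rightarrow> complex) \<Rightarrow> complex) set" where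
  "dual_space E N = {\<phi>.
      (\<forall>u\<in>E. \<forall>v\<in>E. \<phi> (\<lambda>y. u y + v y) = \<phi> u + \<phi> v) \<and>
      (\<forall>c. \<forall>u\<in>E. \<phi> (\<lambda>y. c * u y) = c * \<phi> u) \<and>
      (\<exists>K. \<forall>u\<in>E. norm (\<phi> u) \<le> K * N u) \<and>
      (\<forall>u. u \<notin> E \<longrightarrow> \<phi> u = 0)}"

definition dual_norm ::
  "('y \<Rightarrow> complex) set \<Rightarrow> (('y \<Rightarrow> complex) \<Rightarrow> real) \<Rightarrow> (('y \<Rightarrow> complex) \<Rightarrow> complex) \<Rightarrow> real" where
  "dual_norm E N \<phi> = Sup {norm (\<phi> u) | u. u \<in> E \<and> N u \<le> 1}"

definition dual_map :: "'a set \<Rightarrow> ('a \<Rightarrow> 'b) \<Rightarrow> ('b \<Rightarrow> complex) \<Rightarrow> ('a \<Rightarrow> complex)" where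
  "dual_map E T \<psi> = (\<lambda>u. if u \<in> E then \<psi> (T u) else 0)"

definition initial_top :: "'a set \<Rightarrow> ('a \<Rightarrow> complex) set \<Rightarrow> 'a topology" where
  "initial_top S Fs = topology_generated_by {S \<inter> f -` U | f U. f \<in> Fs \<and> open U}"

definition mmul :: "('i \<times> 'i \<Rightarrow> complex) \<Rightarrow> ('i \<times> 'i \<Rightarrow> complex) \<Rightarrow> ('i \<times> 'i \<Rightarrow> complex)" where
  "mmul a b = (\<lambda>(i, k). \<Sum>\<^sub>\<infinity>j. a (i, j) * b (j, k))"

type_synonym 'i mat = "'i \<times> 'i \<Rightarrow> complex"
type_synonym 'i tens = "('i \<times> 'i) \<times> ('i \<times> 'i) \<Rightarrow> complex"
type_synonym 'i tens_dual = "'i tens \<Rightarrow> complex"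
type_synonym 'i tens_bidual = "'i tens_dual \<Rightarrow> complex"

text \<open>A (x)^ A = l1(I x I) (x)^ l1(I x I) is identified (isometrically, Grothendieck) with
  l1((I x I) x (I x I)) via b \<otimes> c \<mapsto> ((x,y) \<mapsto> b x * c y).  The module actions
  a.(b \<otimes> c) = ab \<otimes> c and (b \<otimes> c).a = b \<otimes> ca then read as follows.\<close>
definition tens :: "'i mat \<Rightarrow> 'i mat \<Rightarrow> 'i tens" where
  "tens b c = (\<lambda>(x, y). b x * c y)"

definition lact :: "'i mat \<Rightarrow> 'i tens \<Rightarrow> 'i tens" where
  "lact a u = (\<lambda>((i, j), (k, l)). \<Sum>\<^sub>\<infinity>p. a (i, p) * u ((p, j), (k, l)))"

definition ract :: "'i tens \<Rightarrow> 'i mat \<Rightarrow> 'i tens" where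
  "ract u a = (\<lambda>((i, j), (k, l)). \<Sum>\<^sub>\<infinity>p. u ((i, j), (k, p)) * a (p, l))"

definition dlact :: "'i mat \<Rightarrow> 'i tens_dual \<Rightarrow> 'i tens_dual" where
  "dlact a T = (\<lambda>u. if u \<in> l1 then T (ract u a) else 0)"

definition dract :: "'i tens_dual \<Rightarrow> 'i mat \<Rightarrow> 'i tens_dual" where
  "dract T a = (\<lambda>u. if u \<in> l1 then T (lact a u) else 0)"

definition tens_dual_space :: "'i tens_dual set" where
  "tens_dual_space = dual_space l1 n1"

definition tens_bidual_space :: "'i tens_bidual set" where
  "tens_bidual_space = dual_space tens_dual_space (dual_norm l1 n1)"

text \<open>Weak* topology on A = (c0(I x I))^*.\<close>
definition wstar_top :: "'i mat topology" where
  "wstar_top = initial_top l1 {(\<lambda>a. pair f a) | f. f \<in> c0}"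

definition weak_tens_dual_top :: "'i tens_dual topology" where
  "weak_tens_dual_top = initial_top tens_dual_space tens_bidual_space"

definition sigma_wc :: "'i tens_dual set" where
  "sigma_wc = {T \<in> tens_dual_space.
      continuous_map wstar_top weak_tens_dual_top (\<lambda>a. dlact a T) \<and>
      continuous_map wstar_top weak_tens_dual_top (\<lambda>a. dract T a)}"

text \<open>Multiplication map \<pi> : A (x)^ A \<rightarrow> A, \<pi>(b \<otimes> c) = bc.\<close>
definition pimap :: "'i tens \<Rightarrow> 'i mat" where
  "pimap u = (\<lambda>(i, l). \<Sum>\<^sub>\<infinity>j. u ((i, j), (j, l)))"

definition iembed :: "'i mat \<Rightarrow> ('i mat \<Rightarrow> complex)" where
  "iembed f = (\<lambda>a. if a \<in> l1 then pair f a else 0)"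

text \<open>Identification (A_*)^* = A: a functional \<Phi> on c0 corresponds to the matrix
  x \<mapsto> \<Phi>(\<delta>_x) (inverse of a \<mapsto> pair _ a).\<close>
definition predual_elem :: "('i mat \<Rightarrow> complex) \<Rightarrow> 'i mat" where
  "predual_elem \<Phi> = (\<lambda>x. \<Phi> (\<lambda>y. if y = x then 1 else 0))"

definition ipi :: "'i tens_bidual \<Rightarrow> 'i mat" where
  "ipi m = predual_elem
      (dual_map c0 iembed
         (dual_map (dual_space (l1 :: 'i mat set) n1) (dual_map l1 pimap) m))"

text \<open>Johnson pseudo-Connes amenability of M_I(C), I = UNIV :: 'i set.  A net is a
  family indexed by the type of (A (x)^ A)^** directed by a proper filter F.
  <T, a.m> = <T.a, m> and <T, m.a> = <a.T, m>.\<close>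
definition johnson_pseudo_connes_amenable :: "'i itself \<Rightarrow> bool" where
  "johnson_pseudo_connes_amenable _ \<longleftrightarrow>
     (\<exists>(F :: 'i tens_bidual filter) (m :: 'i tens_bidual \<Rightarrow> 'i tens_bidual).
        F \<noteq> bot \<and>
        (\<forall>\<alpha>. m \<alpha> \<in> tens_bidual_space \<and>
              (\<forall>a \<in> (l1 :: 'i mat set). \<forall>T \<in> sigma_wc. m \<alpha> (dract T a) = m \<alpha> (dlact a T))) \<and>
        (\<forall>a \<in> (l1 :: 'i mat set).
           ((\<lambda>\<alpha>. n1 (\<lambda>x. mmul (ipi (m \<alpha>)) a x - a x)) \<longlongrightarrow> 0) F))"

end

theory Submission
  imports Defs
begin

text \<open>
  Write pi_entry x for the functional u |-> (pi u)(x) on A (x)^ A, so that the entries of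
  i^* pi^** (m) are the values m (pi_entry x).  Every pi_entry x lies in sigma_wc: both
  a |-> a . pi_entry x and a |-> pi_entry x . a have the form u |-> sum_d u (phi d) a (sigma d)
  with phi injective, so composed with an element of the bidual they become functionals on l1
  that are bounded for the sup norm, and such functionals are given by elements of c0.

  If m commutes with A on sigma_wc, testing against matrix units gives m (pi_entry (s, l)) = 0
  for s \<noteq> l and m (pi_entry (i, i)) = c independent of i.  As the sum of pi_entry (i, i)
  over a finite set S has norm at most 1, |S| |c| is bounded by the norm of m, so c = 0 when I
  is infinite; then i^* pi^** (m) = 0, which is no approximate identity.  When I is finite the
  constant net at the diagonal sum_p e_pj (x) e_jp works.
\<close>

definition delta :: "'x \<Rightarrow> 'x \<Rightarrow> complex" where
  "delta x = (\<lambda>y. if y = x then 1 else 0)"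

lemma infsum_single_point: "infsum (\<lambda>y. if y = x then c else 0) A = (if x \<in> A then c else 0)"
proof -
  have "infsum (\<lambda>y. if y = x then c else 0) A = infsum (\<lambda>y. if y = x then c else 0) (A \<inter> {x})"
    by (rule infsum_cong_neutral) auto
  then show ?thesis by (cases "x \<in> A") auto
qed

lemma l1_iff: "u \<in> l1 \<longleftrightarrow> (\<lambda>x. norm (u x)) summable_on UNIV"
  by (simp add: l1_def)

lemma l1_abs_summable_on: "u \<in> l1 \<Longrightarrow> (\<lambda>x. norm (u x)) summable_on A"
  unfolding l1_iff by (erule summable_on_subset) simp

lemma l1_summable_on: "u \<in> l1 \<Longrightarrow> u summable_on A"
  by (rule abs_summable_summable) (rule l1_abs_summable_on)

lemma n1_nonneg: "0 \<le> n1 u"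
  unfolding n1_def by (simp add: infsum_nonneg)

lemma norm_le_n1: assumes "u \<in> l1" shows "norm (u x) \<le> n1 u"
proof -
  have "infsum (\<lambda>y. norm (u y)) {x} \<le> infsum (\<lambda>y. norm (u y)) UNIV"
    using assms by (intro infsum_mono_neutral) (auto simp: l1_iff)
  then show ?thesis by (simp add: n1_def)
qed

lemma n1_cmult: "n1 (\<lambda>x. c * u x) = norm c * n1 u"
  unfolding n1_def norm_mult by (rule infsum_cmult_right')

lemma l1_mono: assumes "u \<in> l1" "\<And>x. norm (v x) \<le> norm (u x)" shows "v \<in> l1"
  using assms unfolding l1_iff by (auto intro: summable_on_comparison_test)

lemma l1_add: "u \<in> l1 \<Longrightarrow> v \<in> l1 \<Longrightarrow> (\<lambda>x. u x + v x) \<in> l1"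
  unfolding l1_iff
  by (rule summable_on_comparison_test[where f="\<lambda>x. norm (u x) + norm (v x)"])
     (auto intro: summable_on_add norm_triangle_ineq)

lemma l1_cmult: "u \<in> l1 \<Longrightarrow> (\<lambda>x. c * u x) \<in> l1"
  unfolding l1_iff by (simp add: norm_mult summable_on_cmult_right)

lemma l1_finite_support: assumes "finite S" "\<And>x. x \<notin> S \<Longrightarrow> u x = 0" shows "u \<in> l1"
  unfolding l1_iff
  by (subst summable_on_cong_neutral[where T=S and g="\<lambda>x. norm (u x)"]) (use assms in auto)

lemma delta_l1 [simp]: "delta x \<in> l1"
  by (rule l1_finite_support[of "{x}"]) (auto simp: delta_def)

lemma n1_delta [simp]: "n1 (delta x) = 1"
proof -
  have "n1 (delta x) = infsum (\<lambda>y. if y = x then 1 else 0) UNIV"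
    unfolding n1_def delta_def by (rule infsum_cong) simp
  then show ?thesis by (simp add: infsum_single_point)
qed

lemma delta_c0: "delta x \<in> c0"
  unfolding c0_def
proof (intro CollectI allI impI)
  fix e :: real assume "e > 0"
  then have "{y. e \<le> norm (delta x y)} \<subseteq> {x}"
    by (auto simp: delta_def split: if_splits)
  then show "finite {y. e \<le> norm (delta x y)}"
    by (rule finite_subset) simp
qed

lemma pair_delta: "pair (delta x) v = v x"
proof -
  have "pair (delta x) v = infsum (\<lambda>y. if y = x then v x else 0) UNIV"
    unfolding pair_def delta_def by (rule infsum_cong) simp
  then show ?thesis by (simp add: infsum_single_point)
qed

lemma l1_comp_inj: assumes "u \<in> l1" "inj \<phi>" shows "(\<lambda>d. u (\<phi> d)) \<in> l1"
  using summable_on_reindex[OF assms(2), of "\<lambda>y. norm (u y)"] l1_abs_summable_on[OF assms(1)]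
  by (simp add: l1_iff o_def)

lemma n1_comp_inj_le: assumes "u \<in> l1" "inj_on \<phi> D"
  shows "infsum (\<lambda>d. norm (u (\<phi> d))) D \<le> n1 u"
proof -
  have "infsum (\<lambda>d. norm (u (\<phi> d))) D = infsum (\<lambda>y. norm (u y)) (\<phi> ` D)"
    using infsum_reindex[OF assms(2), of "\<lambda>y. norm (u y)"] by (simp add: o_def)
  also have "\<dots> \<le> n1 u"
    unfolding n1_def using assms
    by (intro infsum_mono_neutral) (auto simp: l1_iff intro: l1_abs_summable_on)
  finally show ?thesis .
qed

lemma l1_tensor: assumes "u \<in> l1" "v \<in> l1" shows "(\<lambda>(x, y). u x * v y) \<in> l1"
proof -
  have "((\<lambda>y. norm (u x) * norm (v y)) has_sum norm (u x) * n1 v) UNIV" for x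
    using assms(2) by (intro has_sum_cmult_right) (simp add: l1_iff n1_def)
  moreover have "(\<lambda>x. norm (u x) * n1 v) summable_on UNIV"
    using assms(1) by (intro summable_on_cmult_left) (simp add: l1_iff)
  ultimately have "(\<lambda>(x, y). norm (u x) * norm (v y)) summable_on Sigma UNIV (\<lambda>_. UNIV)"
    by (intro summable_on_SigmaI) auto
  then show ?thesis by (simp add: l1_iff case_prod_unfold norm_mult)
qed

lemma l1_partial_sum:
  fixes f :: "'a \<times> 'b \<Rightarrow> complex"
  assumes "f \<in> l1"
  shows "(\<lambda>a. infsum (\<lambda>b. f (a, b)) UNIV) \<in> l1"
proof -
  have "(\<lambda>a. norm (infsum (\<lambda>b. norm (f (a, b))) UNIV)) summable_on UNIV"
    using assms Infinite_Sum.abs_summable_on_Sigma_iff[where f=f and A=UNIV and B="\<lambda>_. UNIV"]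
    by (simp add: l1_iff)
  then have sums: "(\<lambda>a. complex_of_real (infsum (\<lambda>b. norm (f (a, b))) UNIV)) \<in> l1"
    by (simp add: l1_iff)
  have rows: "(\<lambda>b. norm (f (a, b))) summable_on UNIV" for a
    using l1_comp_inj[OF assms, of "Pair a"] by (simp add: l1_iff inj_on_def)
  show ?thesis
  proof (rule l1_mono[OF sums])
    fix a
    show "norm (infsum (\<lambda>b. f (a, b)) UNIV) \<le> norm (complex_of_real (infsum (\<lambda>b. norm (f (a, b))) UNIV))"
      using norm_infsum_bound[OF rows] by (simp add: infsum_nonneg)
  qed
qed

lemma lact_l1:
  fixes a :: "'i mat" and u :: "'i tens"
  assumes "a \<in> l1" "u \<in> l1"
  shows "lact a u \<in> l1"
proof -
  define \<phi> :: "(('i \<times> 'i) \<times> ('i \<times> 'i)) \<times> 'i \<Rightarrow> ('i \<times> 'i) \<times> ('i \<times> 'i) \<times> ('i \<times> 'i)"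
    where "\<phi> = (\<lambda>(((i, j), (k, l)), p). ((i, p), ((p, j), (k, l))))"
  have "(\<lambda>d. (\<lambda>(x, y). a x * u y) (\<phi> d)) \<in> l1"
    by (rule l1_comp_inj[OF l1_tensor[OF assms]]) (auto simp: \<phi>_def inj_def)
  from l1_partial_sum[OF this]
  show ?thesis by (simp add: \<phi>_def lact_def case_prod_unfold)
qed

lemma ract_l1:
  fixes a :: "'i mat" and u :: "'i tens"
  assumes "u \<in> l1" "a \<in> l1"
  shows "ract u a \<in> l1"
proof -
  define \<phi> :: "(('i \<times> 'i) \<times> ('i \<times> 'i)) \<times> 'i \<Rightarrow> (('i \<times> 'i) \<times> ('i \<times> 'i)) \<times> ('i \<times> 'i)"
    where "\<phi> = (\<lambda>(((i, j), (k, l)), p). (((i, j), (k, p)), (p, l)))"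
  have "(\<lambda>d. (\<lambda>(x, y). u x * a y) (\<phi> d)) \<in> l1"
    by (rule l1_comp_inj[OF l1_tensor[OF assms]]) (auto simp: \<phi>_def inj_def)
  from l1_partial_sum[OF this]
  show ?thesis by (simp add: \<phi>_def ract_def case_prod_unfold)
qed

lemma pimap_l1:
  fixes u :: "'i tens"
  assumes "u \<in> l1"
  shows "pimap u \<in> l1"
proof -
  define \<phi> :: "('i \<times> 'i) \<times> 'i \<Rightarrow> ('i \<times> 'i) \<times> ('i \<times> 'i)"
    where "\<phi> = (\<lambda>((i, l), j). ((i, j), (j, l)))"
  have "(\<lambda>d. u (\<phi> d)) \<in> l1"
    by (rule l1_comp_inj[OF assms]) (auto simp: \<phi>_def inj_def)
  from l1_partial_sum[OF this]
  show ?thesis by (simp add: \<phi>_def pimap_def case_prod_unfold)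
qed

lemma dual_space_apply_add:
  "\<phi> \<in> dual_space E N \<Longrightarrow> u \<in> E \<Longrightarrow> v \<in> E \<Longrightarrow> \<phi> (\<lambda>y. u y + v y) = \<phi> u + \<phi> v"
  unfolding dual_space_def by simp

lemma dual_space_apply_cmult: "\<phi> \<in> dual_space E N \<Longrightarrow> u \<in> E \<Longrightarrow> \<phi> (\<lambda>y. c * u y) = c * \<phi> u"
  unfolding dual_space_def by simp

lemma dual_space_apply_zero: assumes "\<phi> \<in> dual_space E N" shows "\<phi> (\<lambda>_. 0) = 0"
proof (cases "(\<lambda>_. 0) \<in> E")
  case True
  then show ?thesis using dual_space_apply_cmult[OF assms True, of 0] by simp
next
  case False
  then show ?thesis using assms unfolding dual_space_def by simp
qed

lemma dual_space_bound:
  assumes "\<phi> \<in> dual_space E N" "\<And>u. u \<in> E \<Longrightarrow> 0 \<le> N u"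
  obtains K where "0 \<le> K" "\<And>u. u \<in> E \<Longrightarrow> norm (\<phi> u) \<le> K * N u"
proof -
  obtain K where K: "\<And>u. u \<in> E \<Longrightarrow> norm (\<phi> u) \<le> K * N u"
    using assms(1) unfolding dual_space_def by blast
  have "norm (\<phi> u) \<le> max K 0 * N u" if "u \<in> E" for u
    using K[OF that] mult_right_mono[OF max.cobounded1[of K 0] assms(2)[OF that]] by linarith
  then show ?thesis by (intro that[of "max K 0"]) auto
qed

lemma dual_space_zero: "(\<lambda>_. 0) \<in> dual_space E N"
  unfolding dual_space_def by (auto intro: exI[of _ 0])

lemma dual_space_add:
  assumes "\<phi> \<in> dual_space E N" "\<psi> \<in> dual_space E N"
  shows "(\<lambda>u. \<phi> u + \<psi> u) \<in> dual_space E N"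
proof -
  obtain K1 where K1: "\<And>u. u \<in> E \<Longrightarrow> norm (\<phi> u) \<le> K1 * N u"
    using assms(1) unfolding dual_space_def by blast
  obtain K2 where K2: "\<And>u. u \<in> E \<Longrightarrow> norm (\<psi> u) \<le> K2 * N u"
    using assms(2) unfolding dual_space_def by blast
  have "norm (\<phi> u + \<psi> u) \<le> (K1 + K2) * N u" if "u \<in> E" for u
    using norm_triangle_ineq[of "\<phi> u" "\<psi> u"] K1[OF that] K2[OF that] by (simp add: algebra_simps)
  then have "\<exists>K. \<forall>u\<in>E. norm (\<phi> u + \<psi> u) \<le> K * N u" by blast
  with assms show ?thesis unfolding dual_space_def by (auto simp: algebra_simps)
qed

lemma dual_space_cmult:
  assumes "\<phi> \<in> dual_space E N"
  shows "(\<lambda>u. c * \<phi> u) \<in> dual_space E N"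
proof -
  obtain K where K: "\<And>u. u \<in> E \<Longrightarrow> norm (\<phi> u) \<le> K * N u"
    using assms unfolding dual_space_def by blast
  have "norm (c * \<phi> u) \<le> (norm c * K) * N u" if "u \<in> E" for u
    using mult_left_mono[OF K[OF that], of "norm c"] by (simp add: norm_mult mult.assoc)
  then have "\<exists>K. \<forall>u\<in>E. norm (c * \<phi> u) \<le> K * N u" by blast
  with assms show ?thesis unfolding dual_space_def by (auto simp: algebra_simps)
qed

lemma dual_space_sum:
  "finite S \<Longrightarrow> (\<And>i. i \<in> S \<Longrightarrow> \<psi> i \<in> dual_space E N) \<Longrightarrow> (\<lambda>u. \<Sum>i\<in>S. \<psi> i u) \<in> dual_space E N"
  by (induction S rule: finite_induct) (auto intro: dual_space_zero dual_space_add)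

lemma dual_space_apply_sum:
  assumes "\<Phi> \<in> dual_space (dual_space E N) N'" "finite S"
    and "\<And>i. i \<in> S \<Longrightarrow> \<psi> i \<in> dual_space E N"
  shows "\<Phi> (\<lambda>u. \<Sum>i\<in>S. \<psi> i u) = (\<Sum>i\<in>S. \<Phi> (\<psi> i))"
  using assms(2,3)
proof (induction S rule: finite_induct)
  case empty
  then show ?case using dual_space_apply_zero[OF assms(1)] by simp
next
  case (insert x S)
  then show ?case
    using dual_space_apply_add[OF assms(1), of "\<psi> x" "\<lambda>u. \<Sum>i\<in>S. \<psi> i u"] dual_space_sum[of S \<psi>]
    by simp
qed

lemma dual_norm_le:
  assumes "\<And>u. u \<in> l1 \<Longrightarrow> norm (\<phi> u) \<le> C * n1 u" "0 \<le> C"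
  shows "dual_norm l1 n1 \<phi> \<le> C"
  unfolding dual_norm_def
proof (rule cSup_least)
  show "{norm (\<phi> u) |u. u \<in> l1 \<and> n1 u \<le> 1} \<noteq> {}"
    using delta_l1[of undefined] n1_delta[of undefined] by fastforce
next
  fix x assume "x \<in> {norm (\<phi> u) |u. u \<in> l1 \<and> n1 u \<le> 1}"
  then obtain u where "u \<in> l1" "n1 u \<le> 1" "x = norm (\<phi> u)" by auto
  then show "x \<le> C" using assms(1)[of u] mult_left_mono[of "n1 u" 1 C] assms(2) by simp
qed

lemma norm_apply_le_dual_norm:
  assumes \<phi>: "\<phi> \<in> dual_space l1 n1" and u: "u \<in> l1"
  shows "norm (\<phi> u) \<le> dual_norm l1 n1 \<phi> * n1 u"
proof -
  obtain K where K: "0 \<le> K" "\<And>u. u \<in> l1 \<Longrightarrow> norm (\<phi> u) \<le> K * n1 u"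
    using dual_space_bound[OF \<phi> n1_nonneg] by blast
  have unit_ball: "norm (\<phi> v) \<le> dual_norm l1 n1 \<phi>" if "v \<in> l1" "n1 v \<le> 1" for v
  proof -
    have "bdd_above {norm (\<phi> u) |u. u \<in> l1 \<and> n1 u \<le> 1}"
      using K by (intro bdd_aboveI[of _ K]) (auto intro: order_trans mult_left_le)
    then show ?thesis unfolding dual_norm_def by (rule cSup_upper[rotated]) (use that in auto)
  qed
  show ?thesis
  proof (cases "n1 u = 0")
    case True
    then show ?thesis using K(2)[OF u] by simp
  next
    case False
    then have pos: "0 < n1 u" using n1_nonneg[of u] by simp
    let ?c = "complex_of_real (1 / n1 u)"
    have "n1 (\<lambda>y. ?c * u y) = 1"
      unfolding n1_cmult using pos by (simp add: norm_divide)
    then have "norm (\<phi> (\<lambda>y. ?c * u y)) \<le> dual_norm l1 n1 \<phi>"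
      by (intro unit_ball l1_cmult u) simp
    then have "norm (\<phi> u) / n1 u \<le> dual_norm l1 n1 \<phi>"
      using dual_space_apply_cmult[OF \<phi> u, of ?c] pos by (simp add: norm_divide)
    then show ?thesis using pos by (simp add: divide_le_eq)
  qed
qed

lemma dual_norm_nonneg: "\<phi> \<in> dual_space l1 n1 \<Longrightarrow> 0 \<le> dual_norm l1 n1 \<phi>"
  using norm_apply_le_dual_norm[of \<phi> "delta undefined"] by (simp add: order_trans[OF norm_ge_zero])

lemma tens_bidual_bound:
  assumes "m \<in> tens_bidual_space"
  obtains K where "0 \<le> K" "\<And>\<psi>. \<psi> \<in> tens_dual_space \<Longrightarrow> norm (m \<psi>) \<le> K * dual_norm l1 n1 \<psi>"
  using dual_space_bound[OF assms[unfolded tens_bidual_space_def]] dual_norm_nonneg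
  unfolding tens_dual_space_def by metis

section \<open>Functionals on l1 bounded in the sup norm\<close>

lemma n1_outside:
  assumes a: "a \<in> l1" and S: "finite S"
  shows "n1 (\<lambda>y. if y \<in> S then 0 else a y) = n1 a - (\<Sum>x\<in>S. norm (a x))"
proof -
  have "n1 a = infsum (\<lambda>y. norm (a y)) (S \<union> - S)"
    by (simp add: n1_def)
  also have "\<dots> = (\<Sum>x\<in>S. norm (a x)) + infsum (\<lambda>y. norm (a y)) (- S)"
    using S l1_abs_summable_on[OF a] by (subst infsum_Un_disjoint) auto
  also have "infsum (\<lambda>y. norm (a y)) (- S) = n1 (\<lambda>y. if y \<in> S then 0 else a y)"
    unfolding n1_def by (rule infsum_cong_neutral) auto
  finally show ?thesis by simp
qed

lemma c0_if_finite_sums_bounded: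
  assumes "\<And>S. finite S \<Longrightarrow> (\<Sum>x\<in>S. norm (f x)) \<le> K"
  shows "f \<in> c0"
  unfolding c0_def
proof (intro CollectI allI impI)
  fix e :: real assume e: "0 < e"
  have "card G \<le> nat \<lceil>K / e\<rceil>" if "G \<subseteq> {x. e \<le> norm (f x)}" "finite G" for G
  proof -
    have "real (card G) * e = (\<Sum>x\<in>G. e)" by simp
    also have "\<dots> \<le> (\<Sum>x\<in>G. norm (f x))" using that(1) by (intro sum_mono) auto
    also have "\<dots> \<le> K" using assms[OF that(2)] .
    finally have "real (card G) \<le> K / e" using e by (simp add: pos_le_divide_eq)
    then show ?thesis by linarith
  qed
  then show "finite {x. e \<le> norm (f x)}"
    using finite_if_finite_subsets_card_bdd by blast
qed

locale sup_bounded_functional =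
  fixes g :: "('x \<Rightarrow> complex) \<Rightarrow> complex" and K :: real
  assumes add: "a \<in> l1 \<Longrightarrow> b \<in> l1 \<Longrightarrow> g (\<lambda>y. a y + b y) = g a + g b"
    and cmult: "a \<in> l1 \<Longrightarrow> g (\<lambda>y. c * a y) = c * g a"
    and sup_bound: "a \<in> l1 \<Longrightarrow> (\<And>x. norm (a x) \<le> M) \<Longrightarrow> norm (g a) \<le> K * M"
begin

lemma n1_bound: assumes "a \<in> l1" shows "norm (g a) \<le> K * n1 a"
  by (rule sup_bound[OF assms norm_le_n1[OF assms]])

lemma apply_finite_restriction:
  assumes "finite S"
  shows "g (\<lambda>y. if y \<in> S then a y else 0) = (\<Sum>x\<in>S. g (delta x) * a x)"
  using assms
proof (induction S rule: finite_induct)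
  case empty
  have "(\<lambda>_. 0) \<in> l1" by (rule l1_finite_support[of "{}"]) auto
  from cmult[OF this, of 0] show ?case by simp
next
  case (insert x S)
  have split: "(\<lambda>y. if y \<in> insert x S then a y else 0) = (\<lambda>y. a x * delta x y + (if y \<in> S then a y else 0))"
    using insert.hyps by (auto simp: fun_eq_iff delta_def)
  have "(\<lambda>y. if y \<in> S then a y else 0) \<in> l1"
    using insert.hyps by (intro l1_finite_support[of S]) auto
  then have "g (\<lambda>y. if y \<in> insert x S then a y else 0)
      = g (\<lambda>y. a x * delta x y) + g (\<lambda>y. if y \<in> S then a y else 0)"
    unfolding split by (intro add l1_cmult delta_l1)
  also have "\<dots> = a x * g (delta x) + (\<Sum>x\<in>S. g (delta x) * a x)"
    using cmult[OF delta_l1] insert.IH by simp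
  finally show ?case using insert.hyps by (simp add: mult.commute)
qed

lemma has_sum_delta_expansion:
  assumes a: "a \<in> l1"
  shows "((\<lambda>x. g (delta x) * a x) has_sum g a) UNIV"
proof -
  have tail: "norm ((\<Sum>x\<in>S. g (delta x) * a x) - g a) \<le> K * (n1 a - (\<Sum>x\<in>S. norm (a x)))"
    if S: "finite S" for S
  proof -
    define tail where "tail = (\<lambda>y. if y \<in> S then 0 else a y)"
    have tail_l1: "tail \<in> l1" using a by (rule l1_mono) (simp add: tail_def)
    have "g a = g (\<lambda>y. (if y \<in> S then a y else 0) + tail y)"
      by (rule arg_cong[where f=g]) (auto simp: tail_def)
    also have "\<dots> = (\<Sum>x\<in>S. g (delta x) * a x) + g tail"
      using S tail_l1 by (subst add) (auto intro: l1_finite_support simp: apply_finite_restriction)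
    finally have "norm ((\<Sum>x\<in>S. g (delta x) * a x) - g a) = norm (g tail)"
      by (simp add: norm_minus_commute)
    also have "\<dots> \<le> K * n1 tail" by (rule n1_bound[OF tail_l1])
    finally show ?thesis unfolding tail_def n1_outside[OF a S] .
  qed
  have "((\<lambda>y. norm (a y)) has_sum n1 a) UNIV"
    using a by (simp add: l1_iff n1_def)
  then have "((\<lambda>S. K * (n1 a - (\<Sum>x\<in>S. norm (a x)))) \<longlongrightarrow> K * (n1 a - n1 a))
      (finite_subsets_at_top UNIV)"
    unfolding has_sum_def by (intro tendsto_intros)
  then have "((\<lambda>S. K * (n1 a - (\<Sum>x\<in>S. norm (a x)))) \<longlongrightarrow> 0) (finite_subsets_at_top UNIV)"
    by simp
  then have "((\<lambda>S. (\<Sum>x\<in>S. g (delta x) * a x) - g a) \<longlongrightarrow> 0) (finite_subsets_at_top UNIV)"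
    by (rule Lim_null_comparison[rotated]) (auto intro: eventually_finite_subsets_at_top_weakI tail)
  then show ?thesis unfolding has_sum_def by (simp add: LIM_zero_iff)
qed

lemma finite_sums_bounded:
  assumes S: "finite S"
  shows "(\<Sum>x\<in>S. norm (g (delta x))) \<le> K"
proof -
  define f where "f x = g (delta x)" for x
  define a where "a y = (if y \<in> S then cnj (f y) / norm (f y) else 0)" for y
  have a_l1: "a \<in> l1" using S by (intro l1_finite_support[of S]) (auto simp: a_def)
  have "g a = g (\<lambda>y. if y \<in> S then a y else 0)"
    by (rule arg_cong[where f=g]) (auto simp: a_def)
  also have "\<dots> = (\<Sum>x\<in>S. f x * a x)"
    unfolding f_def by (rule apply_finite_restriction[OF S])
  also have "\<dots> = (\<Sum>x\<in>S. complex_of_real (norm (f x)))"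
    by (rule sum.cong) (auto simp: a_def complex_norm_square[symmetric] power2_eq_square)
  also have "\<dots> = complex_of_real (\<Sum>x\<in>S. norm (f x))"
    by simp
  finally have "(\<Sum>x\<in>S. norm (f x)) = norm (g a)"
    by (simp only: norm_of_real abs_of_nonneg[OF sum_nonneg[OF norm_ge_zero]])
  also have "\<dots> \<le> K * 1"
    using a_l1 by (rule sup_bound) (auto simp: a_def norm_divide)
  finally show ?thesis by (simp add: f_def)
qed

lemma represented_by_c0: "\<exists>f\<in>c0. \<forall>a\<in>l1. g a = pair f a"
proof
  show "(\<lambda>x. g (delta x)) \<in> c0"
    by (rule c0_if_finite_sums_bounded) (rule finite_sums_bounded)
  show "\<forall>a\<in>l1. g a = pair (\<lambda>x. g (delta x)) a"
    unfolding pair_def by (auto intro: infsumI[symmetric] has_sum_delta_expansion)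
qed

end

section \<open>Weak* continuity of coupling functionals\<close>

lemma topspace_initial_top:
  assumes "Fs \<noteq> {}"
  shows "topspace (initial_top S Fs) = S"
proof -
  obtain f where "f \<in> Fs" using assms by blast
  then have "S \<inter> f -` UNIV \<in> {S \<inter> f -` U | f U. f \<in> Fs \<and> open U}" by blast
  then show ?thesis unfolding initial_top_def topology_generated_by_topspace by blast
qed

lemma continuous_map_initial_top_generator:
  assumes "f \<in> Fs"
  shows "continuous_map (initial_top S Fs) euclidean f"
  unfolding continuous_map
proof (intro conjI allI impI)
  fix U :: "complex set" assume "openin euclidean U"
  have "{x \<in> topspace (initial_top S Fs). f x \<in> U} = S \<inter> f -` U"
    using topspace_initial_top[of Fs S] assms by auto
  also have "openin (initial_top S Fs) \<dots>"
    unfolding initial_top_def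
    by (rule topology_generated_by_Basis) (use assms \<open>openin euclidean U\<close> in auto)
  finally show "openin (initial_top S Fs) {x \<in> topspace (initial_top S Fs). f x \<in> U}" .
qed simp

lemma continuous_map_into_initial_top:
  assumes "Fs \<noteq> {}" "\<And>x. x \<in> topspace X \<Longrightarrow> D x \<in> S"
    and "\<And>f. f \<in> Fs \<Longrightarrow> continuous_map X euclidean (f \<circ> D)"
  shows "continuous_map X (initial_top S Fs) D"
  unfolding initial_top_def
proof (rule continuous_on_generated_topo)
  fix V assume "V \<in> {S \<inter> f -` U | f U. f \<in> Fs \<and> open U}"
  then obtain f U where V: "V = S \<inter> f -` U" "f \<in> Fs" "open U" by blast
  have "D -` V \<inter> topspace X = {x \<in> topspace X. (f \<circ> D) x \<in> U}"
    using assms(2) V(1) by auto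
  then show "openin X (D -` V \<inter> topspace X)"
    using openin_continuous_map_preimage[OF assms(3)[OF V(2)]] V(3) by simp
next
  have "\<Union> {S \<inter> f -` U | f U. f \<in> Fs \<and> open U} = S"
    using topspace_initial_top[OF assms(1), of S] unfolding initial_top_def by simp
  then show "D ` topspace X \<subseteq> \<Union> {S \<inter> f -` U | f U. f \<in> Fs \<and> open U}"
    using assms(2) by auto
qed

lemma topspace_wstar_top: "topspace wstar_top = l1"
proof -
  have "{(\<lambda>a. pair f a) | f. f \<in> c0} \<noteq> {}"
    by (metis (mono_tags, lifting) delta_c0 empty_iff mem_Collect_eq)
  then show ?thesis unfolding wstar_top_def by (rule topspace_initial_top)
qed

lemma tens_bidual_space_nonempty: "tens_bidual_space \<noteq> {}"
  using dual_space_zero unfolding tens_bidual_space_def by blast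

lemma topspace_weak_tens_dual_top: "topspace weak_tens_dual_top = tens_dual_space"
  unfolding weak_tens_dual_top_def by (rule topspace_initial_top[OF tens_bidual_space_nonempty])

definition coupling :: "('d \<Rightarrow> 'y) \<Rightarrow> ('d \<Rightarrow> 'x) \<Rightarrow> ('x \<Rightarrow> complex) \<Rightarrow> ('y \<Rightarrow> complex) \<Rightarrow> complex"
  where "coupling \<phi> \<sigma> a = (\<lambda>u. if u \<in> l1 then infsum (\<lambda>d. u (\<phi> d) * a (\<sigma> d)) UNIV else 0)"

context
  fixes \<phi> :: "'d \<Rightarrow> 'y" and \<sigma> :: "'d \<Rightarrow> 'x"
  assumes inj: "inj \<phi>"
begin

lemma coupling_abs_summable:
  assumes "u \<in> l1" "\<And>x. norm (a x) \<le> M"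
  shows "(\<lambda>d. norm (u (\<phi> d) * a (\<sigma> d))) summable_on UNIV"
proof (rule summable_on_comparison_test)
  have "(\<lambda>d. norm (u (\<phi> d))) summable_on UNIV"
    using l1_comp_inj[OF assms(1) inj] by (simp add: l1_iff)
  then show "(\<lambda>d. norm (u (\<phi> d)) * M) summable_on UNIV"
    by (rule summable_on_cmult_left)
next
  fix d
  show "norm (u (\<phi> d) * a (\<sigma> d)) \<le> norm (u (\<phi> d)) * M"
    unfolding norm_mult by (rule mult_left_mono[OF assms(2) norm_ge_zero])
qed simp

lemma coupling_summable:
  "u \<in> l1 \<Longrightarrow> (\<And>x. norm (a x) \<le> M) \<Longrightarrow> (\<lambda>d. u (\<phi> d) * a (\<sigma> d)) summable_on UNIV"
  by (rule abs_summable_summable) (rule coupling_abs_summable)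

lemma norm_coupling_le:
  assumes a: "\<And>x. norm (a x) \<le> M"
  shows "norm (coupling \<phi> \<sigma> a u) \<le> M * n1 u"
proof -
  have M: "0 \<le> M" by (rule order_trans[OF norm_ge_zero a])
  show ?thesis
  proof (cases "u \<in> l1")
    case True
    have row: "(\<lambda>d. norm (u (\<phi> d))) summable_on UNIV"
      using l1_comp_inj[OF True inj] by (simp add: l1_iff)
    have "norm (coupling \<phi> \<sigma> a u) \<le> infsum (\<lambda>d. norm (u (\<phi> d) * a (\<sigma> d))) UNIV"
      using norm_infsum_bound[OF coupling_abs_summable[OF True a]] True by (simp add: coupling_def)
    also have "\<dots> \<le> infsum (\<lambda>d. norm (u (\<phi> d)) * M) UNIV"
    proof (rule infsum_mono[OF coupling_abs_summable[OF True a] summable_on_cmult_left[OF row]])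
      fix d
      show "norm (u (\<phi> d) * a (\<sigma> d)) \<le> norm (u (\<phi> d)) * M"
        unfolding norm_mult by (rule mult_left_mono[OF a norm_ge_zero])
    qed
    also have "\<dots> = infsum (\<lambda>d. norm (u (\<phi> d))) UNIV * M"
      by (rule infsum_cmult_left')
    also have "\<dots> \<le> n1 u * M"
      by (rule mult_right_mono[OF n1_comp_inj_le[OF True inj] M])
    finally show ?thesis by (simp add: mult.commute)
  next
    case False
    then show ?thesis by (simp add: coupling_def M n1_nonneg)
  qed
qed

lemma coupling_dual_space:
  assumes a: "\<And>x. norm (a x) \<le> M"
  shows "coupling \<phi> \<sigma> a \<in> dual_space l1 n1"
proof -
  have "coupling \<phi> \<sigma> a (\<lambda>y. u y + v y) = coupling \<phi> \<sigma> a u + coupling \<phi> \<sigma> a v"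
    if "u \<in> l1" "v \<in> l1" for u v
    using that infsum_add[OF coupling_summable[OF that(1) a] coupling_summable[OF that(2) a]]
    by (simp add: coupling_def l1_add distrib_right)
  moreover have "coupling \<phi> \<sigma> a (\<lambda>y. c * u y) = c * coupling \<phi> \<sigma> a u" if "u \<in> l1" for c u
    using that by (simp add: coupling_def l1_cmult mult.assoc infsum_cmult_right')
  moreover have "norm (coupling \<phi> \<sigma> a u) \<le> M * n1 u" for u
    by (rule norm_coupling_le) (rule a)
  then have "\<exists>K. \<forall>u\<in>l1. norm (coupling \<phi> \<sigma> a u) \<le> K * n1 u"
    by blast
  moreover have "\<forall>u. u \<notin> l1 \<longrightarrow> coupling \<phi> \<sigma> a u = 0"
    by (simp add: coupling_def)
  ultimately show ?thesis unfolding dual_space_def by blast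
qed

lemma dual_norm_coupling_le:
  assumes a: "\<And>x. norm (a x) \<le> M"
  shows "dual_norm l1 n1 (coupling \<phi> \<sigma> a) \<le> M"
proof (rule dual_norm_le)
  show "norm (coupling \<phi> \<sigma> a u) \<le> M * n1 u" for u
    by (rule norm_coupling_le) (rule a)
  show "0 \<le> M" by (rule order_trans[OF norm_ge_zero a])
qed

lemma coupling_add:
  assumes "a \<in> l1" "b \<in> l1"
  shows "coupling \<phi> \<sigma> (\<lambda>x. a x + b x) = (\<lambda>u. coupling \<phi> \<sigma> a u + coupling \<phi> \<sigma> b u)"
proof
  fix u
  show "coupling \<phi> \<sigma> (\<lambda>x. a x + b x) u = coupling \<phi> \<sigma> a u + coupling \<phi> \<sigma> b u"
  proof (cases "u \<in> l1")
    case True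
    have "(\<lambda>d. u (\<phi> d) * a (\<sigma> d)) summable_on UNIV" "(\<lambda>d. u (\<phi> d) * b (\<sigma> d)) summable_on UNIV"
      by (rule coupling_summable[OF True], rule norm_le_n1[OF assms(1)])
         (rule coupling_summable[OF True], rule norm_le_n1[OF assms(2)])
    from infsum_add[OF this] True show ?thesis by (simp add: coupling_def distrib_left)
  qed (simp add: coupling_def)
qed

end

lemma coupling_cmult: "coupling \<phi> \<sigma> (\<lambda>x. c * a x) = (\<lambda>u. c * coupling \<phi> \<sigma> a u)"
  by (auto simp: coupling_def fun_eq_iff mult.left_commute infsum_cmult_right')

lemma coupling_tens_dual_space:
  fixes \<phi> :: "'d \<Rightarrow> ('i \<times> 'i) \<times> ('i \<times> 'i)" and \<sigma> :: "'d \<Rightarrow> 'i \<times> 'i"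
  assumes "inj \<phi>" "a \<in> l1"
  shows "coupling \<phi> \<sigma> a \<in> tens_dual_space"
  unfolding tens_dual_space_def by (rule coupling_dual_space[OF assms(1) norm_le_n1[OF assms(2)]])

lemma tens_bidual_coupling_represented_by_c0:
  fixes \<phi> :: "'d \<Rightarrow> ('i \<times> 'i) \<times> ('i \<times> 'i)" and \<sigma> :: "'d \<Rightarrow> 'i \<times> 'i"
  assumes inj: "inj \<phi>" and \<Phi>: "\<Phi> \<in> tens_bidual_space"
  shows "\<exists>f\<in>c0. \<forall>a\<in>l1. \<Phi> (coupling \<phi> \<sigma> a) = pair f a"
proof -
  obtain K where K: "0 \<le> K" "\<And>\<psi>. \<psi> \<in> tens_dual_space \<Longrightarrow> norm (\<Phi> \<psi>) \<le> K * dual_norm l1 n1 \<psi>"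
    using tens_bidual_bound[OF \<Phi>] by blast
  note dual = coupling_tens_dual_space[OF inj]
  have "sup_bounded_functional (\<lambda>a. \<Phi> (coupling \<phi> \<sigma> a)) K"
  proof
    fix a b :: "'i mat"
    assume "a \<in> l1" "b \<in> l1"
    then show "\<Phi> (coupling \<phi> \<sigma> (\<lambda>y. a y + b y)) = \<Phi> (coupling \<phi> \<sigma> a) + \<Phi> (coupling \<phi> \<sigma> b)"
      using \<Phi> dual unfolding tens_bidual_space_def
      by (simp add: coupling_add[OF inj] dual_space_apply_add)
  next
    fix a :: "'i mat" and c :: complex
    assume "a \<in> l1"
    then show "\<Phi> (coupling \<phi> \<sigma> (\<lambda>y. c * a y)) = c * \<Phi> (coupling \<phi> \<sigma> a)"
      using \<Phi> dual unfolding tens_bidual_space_def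
      by (simp add: coupling_cmult dual_space_apply_cmult)
  next
    fix a :: "'i mat" and M :: real
    assume "a \<in> l1" "\<And>x. norm (a x) \<le> M"
    then show "norm (\<Phi> (coupling \<phi> \<sigma> a)) \<le> K * M"
      using K dual dual_norm_coupling_le[OF inj] by (meson mult_left_mono order_trans)
  qed
  then show ?thesis by (rule sup_bounded_functional.represented_by_c0)
qed

lemma continuous_coupling:
  fixes \<phi> :: "'d \<Rightarrow> ('i \<times> 'i) \<times> ('i \<times> 'i)" and \<sigma> :: "'d \<Rightarrow> 'i \<times> 'i"
  assumes inj: "inj \<phi>"
  shows "continuous_map wstar_top weak_tens_dual_top (coupling \<phi> \<sigma>)"
  unfolding weak_tens_dual_top_def
proof (rule continuous_map_into_initial_top)
  show "tens_bidual_space \<noteq> {}" by (rule tens_bidual_space_nonempty)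
  show "coupling \<phi> \<sigma> a \<in> tens_dual_space" if "a \<in> topspace wstar_top" for a
    using that coupling_tens_dual_space[OF inj] by (simp add: topspace_wstar_top)
  fix \<Phi> :: "'i tens_bidual" assume "\<Phi> \<in> tens_bidual_space"
  then obtain f where f: "f \<in> c0" "\<And>a. a \<in> l1 \<Longrightarrow> \<Phi> (coupling \<phi> \<sigma> a) = pair f a"
    using tens_bidual_coupling_represented_by_c0[OF inj] by blast
  have "continuous_map wstar_top euclidean (\<lambda>a. pair f a)"
    unfolding wstar_top_def by (rule continuous_map_initial_top_generator) (use f in blast)
  then show "continuous_map wstar_top euclidean (\<Phi> \<circ> coupling \<phi> \<sigma>)"
    by (rule continuous_map_eq) (simp add: f topspace_wstar_top)
qed

definition pi_entry :: "'i \<times> 'i \<Rightarrow> 'i tens_dual" where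
  "pi_entry x = (\<lambda>u. if u \<in> l1 then pimap u x else 0)"

lemma pi_entry_eq_coupling: "pi_entry (i, l) = coupling (\<lambda>j. ((i, j), (j, l))) (\<lambda>_. ()) (\<lambda>_. 1)"
  by (simp add: fun_eq_iff pi_entry_def coupling_def pimap_def)

lemma pi_entry_dual_space: "pi_entry x \<in> tens_dual_space"
proof -
  obtain i l where x: "x = (i, l)" by (cases x)
  have "inj (\<lambda>j. ((i, j), (j, l)))" by (simp add: inj_def)
  then have "coupling (\<lambda>j. ((i, j), (j, l))) (\<lambda>_. ()) (\<lambda>_. 1) \<in> dual_space l1 n1"
    by (rule coupling_dual_space[where M=1]) simp
  then show ?thesis unfolding x tens_dual_space_def pi_entry_eq_coupling .
qed

lemma iembed_delta_dual_space: "iembed (delta x) \<in> dual_space l1 n1"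
  unfolding dual_space_def iembed_def pair_delta
  by (auto simp: l1_add l1_cmult intro!: exI[of _ 1] norm_le_n1)

lemma ipi_apply: "ipi m x = m (pi_entry x)"
proof -
  have "dual_map l1 pimap (iembed (delta x)) = pi_entry x"
    by (auto simp: fun_eq_iff dual_map_def iembed_def pi_entry_def pair_delta pimap_l1)
  then show ?thesis
    unfolding ipi_def predual_elem_def delta_def[symmetric]
    by (simp add: dual_map_def delta_c0 iembed_delta_dual_space)
qed

lemma dlact_pi_entry:
  assumes a: "a \<in> l1"
  shows "dlact a (pi_entry (i, l)) = coupling (\<lambda>(j, p). ((i, j), (j, p))) (\<lambda>(j, p). (p, l)) a"
proof
  fix u
  show "dlact a (pi_entry (i, l)) u = coupling (\<lambda>(j, p). ((i, j), (j, p))) (\<lambda>(j, p). (p, l)) a u"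
  proof (cases "u \<in> l1")
    case True
    have "inj (\<lambda>(j, p). ((i, j), (j, p)))" by (simp add: inj_def)
    from coupling_summable[OF this True norm_le_n1[OF a]]
    have sm: "(\<lambda>(j, p). u ((i, j), (j, p)) * a (p, l)) summable_on UNIV"
      by (simp add: case_prod_unfold)
    have "dlact a (pi_entry (i, l)) u = infsum (\<lambda>j. infsum (\<lambda>p. u ((i, j), (j, p)) * a (p, l)) UNIV) UNIV"
      using True ract_l1[OF True a] by (simp add: dlact_def pi_entry_def pimap_def ract_def)
    also have "\<dots> = infsum (\<lambda>(j, p). u ((i, j), (j, p)) * a (p, l)) UNIV"
      using infsum_Sigma_banach[OF sm[unfolded UNIV_Times_UNIV[symmetric]]] by simp
    finally show ?thesis using True by (simp add: coupling_def case_prod_unfold)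
  qed (simp add: dlact_def coupling_def)
qed

lemma dract_pi_entry:
  assumes a: "a \<in> l1"
  shows "dract (pi_entry (i, l)) a = coupling (\<lambda>(j, p). ((p, j), (j, l))) (\<lambda>(j, p). (i, p)) a"
proof
  fix u
  show "dract (pi_entry (i, l)) a u = coupling (\<lambda>(j, p). ((p, j), (j, l))) (\<lambda>(j, p). (i, p)) a u"
  proof (cases "u \<in> l1")
    case True
    have "inj (\<lambda>(j, p). ((p, j), (j, l)))" by (simp add: inj_def)
    from coupling_summable[OF this True norm_le_n1[OF a]]
    have sm: "(\<lambda>(j, p). a (i, p) * u ((p, j), (j, l))) summable_on UNIV"
      by (simp add: case_prod_unfold mult.commute)
    have "dract (pi_entry (i, l)) a u = infsum (\<lambda>j. infsum (\<lambda>p. a (i, p) * u ((p, j), (j, l))) UNIV) UNIV"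
      using True lact_l1[OF a True] by (simp add: dract_def pi_entry_def pimap_def lact_def)
    also have "\<dots> = infsum (\<lambda>(j, p). a (i, p) * u ((p, j), (j, l))) UNIV"
      using infsum_Sigma_banach[OF sm[unfolded UNIV_Times_UNIV[symmetric]]] by simp
    finally show ?thesis using True by (simp add: coupling_def case_prod_unfold mult.commute)
  qed (simp add: dract_def coupling_def)
qed

lemma pi_entry_sigma_wc: "pi_entry x \<in> sigma_wc"
proof -
  obtain i l where x: "x = (i, l)" by (cases x)
  have "continuous_map wstar_top weak_tens_dual_top (\<lambda>a. dlact a (pi_entry (i, l)))"
    by (rule continuous_map_eq[OF continuous_coupling[where \<phi>="\<lambda>(j, p). ((i, j), (j, p))"
          and \<sigma>="\<lambda>(j, p). (p, l)"]]) (simp_all add: inj_def topspace_wstar_top dlact_pi_entry)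
  moreover have "continuous_map wstar_top weak_tens_dual_top (\<lambda>a. dract (pi_entry (i, l)) a)"
    by (rule continuous_map_eq[OF continuous_coupling[where \<phi>="\<lambda>(j, p). ((p, j), (j, l))"
          and \<sigma>="\<lambda>(j, p). (i, p)"]]) (simp_all add: inj_def topspace_wstar_top dract_pi_entry)
  ultimately show ?thesis using pi_entry_dual_space unfolding sigma_wc_def x by blast
qed

section \<open>Commutation with matrix units\<close>

lemma ract_delta: "ract u (delta (r, s)) ((i, j), (k, l)) = (if l = s then u ((i, j), (k, r)) else 0)"
proof -
  have "ract u (delta (r, s)) ((i, j), (k, l))
      = infsum (\<lambda>p. if p = r then (if l = s then u ((i, j), (k, r)) else 0) else 0) UNIV"
    unfolding ract_def prod.case by (rule infsum_cong) (simp add: delta_def)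
  then show ?thesis by (simp add: infsum_single_point)
qed

lemma lact_delta: "lact (delta (r, s)) u ((i, j), (k, l)) = (if i = r then u ((s, j), (k, l)) else 0)"
proof -
  have "lact (delta (r, s)) u ((i, j), (k, l))
      = infsum (\<lambda>p. if p = s then (if i = r then u ((s, j), (k, l)) else 0) else 0) UNIV"
    unfolding lact_def prod.case by (rule infsum_cong) (simp add: delta_def)
  then show ?thesis by (simp add: infsum_single_point)
qed

lemma dlact_delta_pi_entry:
  "dlact (delta (r, s)) (pi_entry (i, l)) = (if l = s then pi_entry (i, r) else (\<lambda>_. 0))"
  by (auto simp: fun_eq_iff dlact_def pi_entry_def ract_l1 pimap_def ract_delta)

lemma dract_pi_entry_delta:
  "dract (pi_entry (i, l)) (delta (r, s)) = (if i = r then pi_entry (s, l) else (\<lambda>_. 0))"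
  by (auto simp: fun_eq_iff dract_def pi_entry_def lact_l1 pimap_def lact_delta)

definition sigma_wc_central :: "'i tens_bidual \<Rightarrow> bool" where
  "sigma_wc_central m \<longleftrightarrow> (\<forall>a\<in>l1. \<forall>T\<in>sigma_wc. m (dract T a) = m (dlact a T))"

lemma sigma_wc_central_delta_pi_entry:
  assumes "sigma_wc_central m"
  shows "m (dract (pi_entry x) (delta y)) = m (dlact (delta y) (pi_entry x))"
  by (rule assms[unfolded sigma_wc_central_def, rule_format, OF delta_l1 pi_entry_sigma_wc])

lemma sigma_wc_central_off_diagonal:
  assumes m: "m \<in> tens_bidual_space" and central: "sigma_wc_central m" and "s \<noteq> l"
  shows "m (pi_entry (s, l)) = 0"
  using sigma_wc_central_delta_pi_entry[OF central, of "(s, l)" "(s, s)"] \<open>s \<noteq> l\<close>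
    dual_space_apply_zero[OF m[unfolded tens_bidual_space_def]]
  by (simp add: dlact_delta_pi_entry dract_pi_entry_delta)

lemma sigma_wc_central_diagonal:
  "sigma_wc_central m \<Longrightarrow> m (pi_entry (i, i)) = m (pi_entry (l, l))"
  using sigma_wc_central_delta_pi_entry[of m "(i, l)" "(i, l)"]
  by (simp add: dlact_delta_pi_entry dract_pi_entry_delta)

lemma sum_diagonal_pi_entry_eq_coupling:
  fixes S :: "'i set"
  assumes S: "finite S"
  shows "(\<lambda>u. \<Sum>i\<in>S. pi_entry (i, i) u)
       = coupling (\<lambda>(i, j). ((i, j), (j, i))) fst (\<lambda>i. if i \<in> S then 1 else 0)"
proof
  fix u :: "'i tens"
  show "(\<Sum>i\<in>S. pi_entry (i, i) u)
      = coupling (\<lambda>(i, j). ((i, j), (j, i))) fst (\<lambda>i. if i \<in> S then 1 else 0) u"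
  proof (cases "u \<in> l1")
    case True
    have "(\<lambda>(i, j). u ((i, j), (j, i))) \<in> l1"
      using l1_comp_inj[OF True, of "\<lambda>(i, j). ((i, j), (j, i))"] by (simp add: inj_def case_prod_unfold)
    then have sm: "(\<lambda>(i, j). u ((i, j), (j, i))) summable_on S \<times> UNIV"
      by (rule l1_summable_on)
    have "(\<Sum>i\<in>S. pi_entry (i, i) u) = infsum (\<lambda>i. infsum (\<lambda>j. u ((i, j), (j, i))) UNIV) S"
      using True S by (simp add: pi_entry_def pimap_def)
    also have "\<dots> = infsum (\<lambda>(i, j). u ((i, j), (j, i))) (S \<times> UNIV)"
      using infsum_Sigma_banach[OF sm] by simp
    also have "\<dots> = infsum (\<lambda>(i, j). u ((i, j), (j, i)) * (if i \<in> S then 1 else 0)) UNIV"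
      by (rule infsum_cong_neutral) (auto split: if_splits)
    finally show ?thesis using True by (simp add: coupling_def case_prod_unfold)
  qed (simp add: pi_entry_def coupling_def)
qed

lemma dual_norm_sum_diagonal_pi_entry_le:
  "finite S \<Longrightarrow> dual_norm l1 n1 (\<lambda>u. \<Sum>i\<in>S. pi_entry (i, i) u) \<le> 1"
  unfolding sum_diagonal_pi_entry_eq_coupling
  by (rule dual_norm_coupling_le) (simp_all add: inj_def)

lemma sigma_wc_central_diagonal_zero:
  fixes m :: "'i tens_bidual"
  assumes inf: "infinite (UNIV :: 'i set)"
    and m: "m \<in> tens_bidual_space" and central: "sigma_wc_central m"
  shows "m (pi_entry (i, i)) = 0"
proof -
  obtain K where K: "0 \<le> K" "\<And>\<psi>. \<psi> \<in> tens_dual_space \<Longrightarrow> norm (m \<psi>) \<le> K * dual_norm l1 n1 \<psi>"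
    using tens_bidual_bound[OF m] by blast
  have bound: "real n * norm (m (pi_entry (i, i))) \<le> K" for n
  proof -
    obtain S :: "'i set" where S: "finite S" "card S = n"
      using infinite_arbitrarily_large[OF inf] by blast
    have sum_dual: "(\<lambda>u. \<Sum>i\<in>S. pi_entry (i, i) u) \<in> tens_dual_space"
      using S(1) pi_entry_dual_space unfolding tens_dual_space_def by (rule dual_space_sum)
    have "m (\<lambda>u. \<Sum>i\<in>S. pi_entry (i, i) u) = (\<Sum>k\<in>S. m (pi_entry (k, k)))"
      using m S(1) pi_entry_dual_space unfolding tens_bidual_space_def tens_dual_space_def
      by (rule dual_space_apply_sum)
    also have "\<dots> = (\<Sum>k\<in>S. m (pi_entry (i, i)))"
      by (rule sum.cong[OF refl sigma_wc_central_diagonal[OF central]])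
    also have "\<dots> = of_nat n * m (pi_entry (i, i))"
      using S by simp
    finally have "real n * norm (m (pi_entry (i, i))) = norm (m (\<lambda>u. \<Sum>i\<in>S. pi_entry (i, i) u))"
      by (simp add: norm_mult)
    also have "\<dots> \<le> K * dual_norm l1 n1 (\<lambda>u. \<Sum>i\<in>S. pi_entry (i, i) u)"
      by (rule K(2)[OF sum_dual])
    also have "\<dots> \<le> K * 1"
      by (rule mult_left_mono[OF dual_norm_sum_diagonal_pi_entry_le[OF S(1)] K(1)])
    finally show ?thesis by simp
  qed
  show ?thesis
  proof (rule ccontr)
    assume "m (pi_entry (i, i)) \<noteq> 0"
    then obtain n :: nat where "K < real n * norm (m (pi_entry (i, i)))"
      using reals_Archimedean3 by (meson zero_less_norm_iff)
    with bound[of n] show False by simp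
  qed
qed

lemma ipi_eq_zero_if_sigma_wc_central:
  fixes m :: "'i tens_bidual"
  assumes "infinite (UNIV :: 'i set)" "m \<in> tens_bidual_space" "sigma_wc_central m"
  shows "ipi m = (\<lambda>_. 0)"
proof
  fix x :: "'i \<times> 'i"
  obtain s l where x: "x = (s, l)" by (cases x)
  show "ipi m x = 0"
    unfolding ipi_apply x
    using sigma_wc_central_diagonal_zero[OF assms] sigma_wc_central_off_diagonal[OF assms(2,3)]
    by (cases "s = l") auto
qed

lemma amenable_imp_finite:
  assumes "johnson_pseudo_connes_amenable TYPE('i)"
  shows "finite (UNIV :: 'i set)"
proof (rule ccontr)
  assume inf: "infinite (UNIV :: 'i set)"
  from assms obtain F :: "'i tens_bidual filter" and m :: "'i tens_bidual \<Rightarrow> 'i tens_bidual"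
    where F: "F \<noteq> bot" and m: "\<And>\<alpha>. m \<alpha> \<in> tens_bidual_space" "\<And>\<alpha>. sigma_wc_central (m \<alpha>)"
      and approx: "\<And>a. a \<in> l1 \<Longrightarrow> ((\<lambda>\<alpha>. n1 (\<lambda>x. mmul (ipi (m \<alpha>)) a x - a x)) \<longlongrightarrow> 0) F"
    unfolding johnson_pseudo_connes_amenable_def sigma_wc_central_def by blast
  have "n1 (\<lambda>x. mmul (ipi (m \<alpha>)) (delta y) x - delta y x) = 1" for \<alpha> y
    using n1_cmult[of "-1" "delta y"]
    by (simp add: ipi_eq_zero_if_sigma_wc_central[OF inf m] mmul_def case_prod_unfold)
  then have "((\<lambda>\<alpha>. 1 :: real) \<longlongrightarrow> 0) F"
    using approx[OF delta_l1] by simp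
  from tendsto_unique[OF F tendsto_const this] show False by simp
qed

section \<open>The diagonal for finite index sets\<close>

definition bidual_embed :: "'i tens \<Rightarrow> 'i tens_bidual" where
  "bidual_embed u = (\<lambda>T. if T \<in> tens_dual_space then T u else 0)"

lemma bidual_embed_mem:
  assumes u: "u \<in> l1"
  shows "bidual_embed u \<in> tens_bidual_space"
proof -
  have "norm (bidual_embed u T) \<le> n1 u * dual_norm l1 n1 T" if "T \<in> tens_dual_space" for T
    using norm_apply_le_dual_norm[OF that[unfolded tens_dual_space_def] u] that
    by (simp add: bidual_embed_def mult.commute)
  then have "\<exists>K. \<forall>T\<in>tens_dual_space. norm (bidual_embed u T) \<le> K * dual_norm l1 n1 T"
    by blast
  moreover have "bidual_embed u (\<lambda>y. T y + T' y) = bidual_embed u T + bidual_embed u T'"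
    if "T \<in> tens_dual_space" "T' \<in> tens_dual_space" for T T'
    using that dual_space_add[of T l1 n1 T'] by (simp add: bidual_embed_def tens_dual_space_def)
  moreover have "bidual_embed u (\<lambda>y. c * T y) = c * bidual_embed u T" if "T \<in> tens_dual_space" for c T
    using that dual_space_cmult[of T l1 n1 c] by (simp add: bidual_embed_def tens_dual_space_def)
  ultimately show ?thesis
    unfolding tens_bidual_space_def dual_space_def by (simp add: bidual_embed_def)
qed

lemma ipi_bidual_embed:
  assumes "u \<in> l1"
  shows "ipi (bidual_embed u) = pimap u"
proof
  fix x
  have "ipi (bidual_embed u) x = pi_entry x u"
    by (simp add: ipi_apply bidual_embed_def pi_entry_dual_space)
  then show "ipi (bidual_embed u) x = pimap u x"
    using assms by (simp add: pi_entry_def)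
qed

lemma sigma_wc_central_bidual_embed:
  fixes u :: "'i tens"
  assumes "\<And>a. a \<in> l1 \<Longrightarrow> lact a u = ract u a"
  shows "sigma_wc_central (bidual_embed u)"
  unfolding sigma_wc_central_def
proof (intro ballI)
  fix a :: "'i mat" and T :: "'i tens_dual"
  assume a: "a \<in> l1" and T: "T \<in> sigma_wc"
  have "dlact a T \<in> tens_dual_space" "dract T a \<in> tens_dual_space"
    using T a continuous_map_image_subset_topspace
    unfolding sigma_wc_def topspace_wstar_top[symmetric] topspace_weak_tens_dual_top[symmetric]
    by blast+
  then show "bidual_embed u (dract T a) = bidual_embed u (dlact a T)"
    by (simp add: bidual_embed_def dlact_def dract_def assms[OF a])
qed

text \<open>The diagonal sum_p e_pj (x) e_jp, for a fixed index j.\<close>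

definition diagonal_tensor :: "'i \<Rightarrow> 'i tens" where
  "diagonal_tensor j = (\<lambda>((p, q), (k, l)). if q = j \<and> k = j \<and> p = l then 1 else 0)"

lemma lact_diagonal_tensor: "lact a (diagonal_tensor j) = ract (diagonal_tensor j) a"
proof -
  have "lact a (diagonal_tensor j) ((i, q), (k, l)) = (if q = j \<and> k = j then a (i, l) else 0)"
    and "ract (diagonal_tensor j) a ((i, q), (k, l)) = (if q = j \<and> k = j then a (i, l) else 0)"
    for i q k l
  proof -
    have "lact a (diagonal_tensor j) ((i, q), (k, l))
        = infsum (\<lambda>p. if p = l then (if q = j \<and> k = j then a (i, l) else 0) else 0) UNIV"
      unfolding lact_def prod.case by (rule infsum_cong) (simp add: diagonal_tensor_def)
    then show "lact a (diagonal_tensor j) ((i, q), (k, l)) = (if q = j \<and> k = j then a (i, l) else 0)"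
      by (simp add: infsum_single_point)
    have "ract (diagonal_tensor j) a ((i, q), (k, l))
        = infsum (\<lambda>p. if p = i then (if q = j \<and> k = j then a (i, l) else 0) else 0) UNIV"
      unfolding ract_def prod.case by (rule infsum_cong) (auto simp: diagonal_tensor_def)
    then show "ract (diagonal_tensor j) a ((i, q), (k, l)) = (if q = j \<and> k = j then a (i, l) else 0)"
      by (simp add: infsum_single_point)
  qed
  then show ?thesis by (auto simp: fun_eq_iff)
qed

lemma pimap_diagonal_tensor: "pimap (diagonal_tensor j) = (\<lambda>(i, l). if i = l then 1 else 0)"
proof -
  have "pimap (diagonal_tensor j) (i, l) = infsum (\<lambda>q. if q = j then (if i = l then 1 else 0) else 0) UNIV"
    for i l
    unfolding pimap_def prod.case by (rule infsum_cong) (auto simp: diagonal_tensor_def)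
  then show ?thesis by (auto simp: fun_eq_iff infsum_single_point)
qed

lemma mmul_identity_left: "mmul (\<lambda>(i, l). if i = l then 1 else 0) a = a"
proof -
  have "mmul (\<lambda>(i, l). if i = l then 1 else 0) a (i, k) = infsum (\<lambda>j. if j = i then a (i, k) else 0) UNIV"
    for i k
    unfolding mmul_def prod.case by (rule infsum_cong) simp
  then show ?thesis by (auto simp: fun_eq_iff infsum_single_point)
qed

lemma finite_imp_amenable:
  assumes fin: "finite (UNIV :: 'i set)"
  shows "johnson_pseudo_connes_amenable TYPE('i)"
proof -
  define m :: "'i tens_bidual" where "m = bidual_embed (diagonal_tensor undefined)"
  have "\<not> eventually (\<lambda>_. False) (top :: 'i tens_bidual filter)"
    by (simp add: eventually_top)
  then have "(top :: 'i tens_bidual filter) \<noteq> bot"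
    by (metis eventually_bot)
  moreover have "diagonal_tensor undefined \<in> (l1 :: 'i tens set)"
    by (rule l1_finite_support[of UNIV]) (simp_all add: fin finite_Prod_UNIV)
  then have "m \<in> tens_bidual_space" "sigma_wc_central m" and "mmul (ipi m) a = a" for a
    unfolding m_def
    by (simp_all add: bidual_embed_mem sigma_wc_central_bidual_embed lact_diagonal_tensor
                      ipi_bidual_embed pimap_diagonal_tensor mmul_identity_left)
  ultimately show ?thesis
    unfolding johnson_pseudo_connes_amenable_def sigma_wc_central_def
    by (intro exI[of _ top] exI[of _ "\<lambda>_. m"]) (simp add: n1_def)
qed

theorem theorem3p2:
  "johnson_pseudo_connes_amenable TYPE('i) \<longleftrightarrow> finite (UNIV :: 'i set)"
  using amenable_imp_finite finite_imp_amenable by blast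

end
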